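(* Let $(G,k)$ be an instance of PITVD and let $P=(v_1,v_2,\dots,v_\ell)$ be a degree-2-path in $G$ that is not a degree-2-tail, with $\ell\ge5$. Let $Z=\{v_3,\dots,v_{\ell-2}\}$ and let $G'$ be obtained from $G$ by deleting all vertices of $Z$ and adding the edge $v_2v_{\ell-1}$. Then $(G,k)$ is a yes-instance of PITVD if and only if $(G',k)$ is a yes-instance of PITVD.
   Context: PITVD: the input is an undirected multigraph $G$ (no self-loops) and an integer $k$; the question is whether there exists $X\subseteq V(G)$ with $|X|\le k$ such that $G-X$ is a simple graph and every connected component of $G-X$ is a proper interval graph or a tree. A path $(v_1,\dots,v_\ell)$ (distinct vertices, consecutive ones adjacent) is a degree-2-path if every internal vertex has degree exactly $2$ in $G$; it is a degree-2-tail if $d_G(v_1)>2$ and $d_G(v_\ell)=1$. *)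

theory Defs
  imports Main "HOL.Real"
begin

text \<open>A finite undirected multigraph without self-loops: a finite vertex set V and an
  edge-multiplicity function m (m u v = number of parallel edges between u and v).\<close>
definition multigraph :: "'a set \<Rightarrow> ('a \<Rightarrow> 'a \<Rightarrow> nat) \<Rightarrow> bool" where
  "multigraph V m \<longleftrightarrow> finite V \<and> (\<forall>u. m u u = 0) \<and> (\<forall>u v. m u v = m v u)
     \<and> (\<forall>u v. 0 < m u v \<longrightarrow> u \<in> V \<and> v \<in> V)"

definition deg :: "'a set \<Rightarrow> ('a \<Rightarrow> 'a \<Rightarrow> nat) \<Rightarrow> 'a \<Rightarrow> nat" where
  "deg V m v = (\<Sum>u\<in>V. m v u)"

definition deg2_path :: "'a set \<Rightarrow> ('a \<Rightarrow> 'a \<Rightarrow> nat) \<Rightarrow> 'a list \<Rightarrow> bool" where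
  "deg2_path V m P \<longleftrightarrow> P \<noteq> [] \<and> distinct P \<and> set P \<subseteq> V
     \<and> (\<forall>i. Suc i < length P \<longrightarrow> 0 < m (P ! i) (P ! Suc i))
     \<and> (\<forall>i. 0 < i \<and> Suc i < length P \<longrightarrow> deg V m (P ! i) = 2)"

definition deg2_tail :: "'a set \<Rightarrow> ('a \<Rightarrow> 'a \<Rightarrow> nat) \<Rightarrow> 'a list \<Rightarrow> bool" where
  "deg2_tail V m P \<longleftrightarrow> deg2_path V m P \<and> deg V m (hd P) > 2 \<and> deg V m (last P) = 1"

text \<open>Simple graphs on a vertex set S with adjacency relation E (only used for u, v in S).\<close>
definition reach :: "'a set \<Rightarrow> ('a \<Rightarrow> 'a \<Rightarrow> bool) \<Rightarrow> 'a \<Rightarrow> 'a \<Rightarrow> bool" where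
  "reach S E = (\<lambda>x y. x \<in> S \<and> y \<in> S \<and> E x y)\<^sup>*\<^sup>*"

definition component :: "'a set \<Rightarrow> ('a \<Rightarrow> 'a \<Rightarrow> bool) \<Rightarrow> 'a \<Rightarrow> 'a set" where
  "component S E v = {u \<in> S. reach S E v u}"

definition connected_graph :: "'a set \<Rightarrow> ('a \<Rightarrow> 'a \<Rightarrow> bool) \<Rightarrow> bool" where
  "connected_graph S E \<longleftrightarrow> S \<noteq> {} \<and> (\<forall>u\<in>S. \<forall>v\<in>S. reach S E u v)"

definition is_cycle :: "'a set \<Rightarrow> ('a \<Rightarrow> 'a \<Rightarrow> bool) \<Rightarrow> 'a list \<Rightarrow> bool" where
  "is_cycle S E cs \<longleftrightarrow> 3 \<le> length cs \<and> distinct cs \<and> set cs \<subseteq> S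
     \<and> (\<forall>i. Suc i < length cs \<longrightarrow> E (cs ! i) (cs ! Suc i)) \<and> E (last cs) (hd cs)"

definition is_tree :: "'a set \<Rightarrow> ('a \<Rightarrow> 'a \<Rightarrow> bool) \<Rightarrow> bool" where
  "is_tree S E \<longleftrightarrow> connected_graph S E \<and> \<not> (\<exists>cs. is_cycle S E cs)"

definition proper_interval :: "'a set \<Rightarrow> ('a \<Rightarrow> 'a \<Rightarrow> bool) \<Rightarrow> bool" where
  "proper_interval S E \<longleftrightarrow> (\<exists>l r :: 'a \<Rightarrow> real.
     (\<forall>v\<in>S. l v \<le> r v)
     \<and> (\<forall>u\<in>S. \<forall>v\<in>S. \<not> (l u \<le> l v \<and> r v \<le> r u \<and> (l u < l v \<or> r v < r u)))
     \<and> (\<forall>u\<in>S. \<forall>v\<in>S. u \<noteq> v \<longrightarrow> (E u v \<longleftrightarrow> l u \<le> r v \<and> l v \<le> r u)))"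

definition pitvd :: "'a set \<Rightarrow> ('a \<Rightarrow> 'a \<Rightarrow> nat) \<Rightarrow> int \<Rightarrow> bool" where
  "pitvd V m k \<longleftrightarrow> (\<exists>X \<subseteq> V. int (card X) \<le> k
     \<and> (\<forall>u\<in>V - X. \<forall>v\<in>V - X. m u v \<le> 1)
     \<and> (\<forall>v\<in>V - X. proper_interval (component (V - X) (\<lambda>x y. 0 < m x y) v) (\<lambda>x y. 0 < m x y)
                  \<or> is_tree (component (V - X) (\<lambda>x y. 0 < m x y) v) (\<lambda>x y. 0 < m x y)))"

definition reduce_mult :: "('a \<Rightarrow> 'a \<Rightarrow> nat) \<Rightarrow> 'a set \<Rightarrow> 'a \<Rightarrow> 'a \<Rightarrow> 'a \<Rightarrow> 'a \<Rightarrow> nat" where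
  "reduce_mult m Z a b = (\<lambda>u v. if u \<in> Z \<or> v \<in> Z then 0
      else m u v + (if (u = a \<and> v = b) \<or> (u = b \<and> v = a) then 1 else 0))"

end

theory Submission
  imports Defs
begin

text \<open>Suppressing one inner vertex c of the path, whose neighbours b and d are inner vertices
  as well, does not change the answer. A solution X of G yields one of G' of the same size
  (delete b instead of c if c \<in> X), and conversely G - X arises from G' - X by subdividing
  the edge bd with c, by attaching c as a pendant vertex to b or d, or by adding c as an
  isolated vertex. Each of these operations, and its inverse, preserves proper interval
  components (by explicitly modifying interval models) and acyclic components (a finite graph
  is acyclic iff it contains no nonempty subgraph of minimum degree two). Suppressing the
  vertices v_3, ..., v_{\<ell>-2} one at a time gives the lemma.\<close>

definition undirected :: "('a \<Rightarrow> 'a \<Rightarrow> bool) \<Rightarrow> bool" where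
  "undirected E \<longleftrightarrow> symp E \<and> irreflp E"

lemma undirected_sym: "undirected E \<Longrightarrow> E x y = E y x"
  unfolding undirected_def by (auto dest: sympD)

lemma undirected_irrefl: "undirected E \<Longrightarrow> \<not> E x x"
  unfolding undirected_def by (simp add: irreflpD)

abbreviation adjacent :: "('a \<Rightarrow> 'a \<Rightarrow> nat) \<Rightarrow> 'a \<Rightarrow> 'a \<Rightarrow> bool" where
  "adjacent m \<equiv> \<lambda>x y. 0 < m x y"

lemma multigraph_undirected: "multigraph V m \<Longrightarrow> undirected (adjacent m)"
  unfolding multigraph_def undirected_def symp_def irreflp_def by auto

lemma reach_refl [simp]: "reach S E x x"
  by (simp add: reach_def)

lemma reach_step: "reach S E x y \<Longrightarrow> y \<in> S \<Longrightarrow> z \<in> S \<Longrightarrow> E y z \<Longrightarrow> reach S E x z"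
  unfolding reach_def by (rule rtranclp.rtrancl_into_rtrancl) auto

lemma reach_edge: "y \<in> S \<Longrightarrow> z \<in> S \<Longrightarrow> E y z \<Longrightarrow> reach S E y z"
  using reach_step[of S E y y z] by simp

lemma reach_trans: "reach S E x y \<Longrightarrow> reach S E y z \<Longrightarrow> reach S E x z"
  unfolding reach_def by (rule rtranclp_trans)

lemma reach_sym:
  assumes "undirected E" "reach S E x y"
  shows "reach S E y x"
proof -
  have "symp (\<lambda>x y. x \<in> S \<and> y \<in> S \<and> E x y)"
    using undirected_sym[OF assms(1)] by (auto intro: sympI)
  then show ?thesis
    using assms(2) unfolding reach_def by (meson symp_rtranclp sympD)
qed

lemma reach_induct [consumes 1, case_names refl step]:
  assumes "reach S E x y" "P x"
    "\<And>y z. reach S E x y \<Longrightarrow> P y \<Longrightarrow> y \<in> S \<Longrightarrow> z \<in> S \<Longrightarrow> E y z \<Longrightarrow> P z"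
  shows "P y"
  using assms(1) unfolding reach_def
proof (induction rule: rtranclp_induct)
  case base
  then show ?case using assms(2) by simp
next
  case (step y z)
  then show ?case using assms(3)[of y z] unfolding reach_def by auto
qed

lemma reach_map:
  assumes "reach S E x y"
    and "\<And>u v. u \<in> S \<Longrightarrow> v \<in> S \<Longrightarrow> E u v \<Longrightarrow> reach S' E' (f u) (f v)"
  shows "reach S' E' (f x) (f y)"
  using assms(1)
proof (induction rule: reach_induct)
  case (step y z)
  then have "reach S' E' (f y) (f z)" using assms(2) by blast
  then show ?case using step reach_trans by metis
qed simp

lemma reach_mono:
  assumes "reach S E x y" "S \<subseteq> S'" "\<And>u v. u \<in> S \<Longrightarrow> v \<in> S \<Longrightarrow> E u v \<Longrightarrow> E' u v"
  shows "reach S' E' x y"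
  using assms(1)
proof (induction rule: reach_induct)
  case (step y z)
  then show ?case using assms(2,3) by (meson reach_step subsetD)
qed simp

lemma component_subset: "component S E v \<subseteq> S"
  unfolding component_def by auto

lemma self_in_component: "v \<in> S \<Longrightarrow> v \<in> component S E v"
  unfolding component_def by simp

lemma component_eq:
  assumes "undirected E" "u \<in> component S E v"
  shows "component S E u = component S E v"
proof -
  have vu: "reach S E v u" and uv: "reach S E u v"
    using assms reach_sym unfolding component_def by auto
  show ?thesis
    unfolding component_def using reach_trans[OF vu] reach_trans[OF uv] by blast
qed

lemma reach_within_component:
  assumes "reach S E v u" "v \<in> S"
  shows "reach (component S E v) E v u"
  using assms(1)
proof (induction rule: reach_induct)
  case (step y z)
  then have "y \<in> component S E v" "z \<in> component S E v"
    unfolding component_def by (auto intro: reach_step)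
  then show ?case using step reach_step by metis
qed simp

lemma connected_graph_component:
  assumes "undirected E" "v \<in> S"
  shows "connected_graph (component S E v) E"
  unfolding connected_graph_def
proof (intro conjI ballI)
  show "component S E v \<noteq> {}" using self_in_component[OF assms(2)] by auto
next
  fix u w assume "u \<in> component S E v" "w \<in> component S E v"
  then have "reach (component S E v) E v u" "reach (component S E v) E v w"
    using assms(2) reach_within_component unfolding component_def by auto
  then show "reach (component S E v) E u w"
    using reach_sym[OF assms(1)] reach_trans by metis
qed

subsection \<open>Cycles and two-cores\<close>

definition two_core :: "'a set \<Rightarrow> ('a \<Rightarrow> 'a \<Rightarrow> bool) \<Rightarrow> bool" where
  "two_core T E \<longleftrightarrow> T \<noteq> {} \<and> (\<forall>x\<in>T. \<exists>y\<in>T. \<exists>z\<in>T. y \<noteq> z \<and> E x y \<and> E x z)"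

text \<open>Acyclicity is expressed through two-cores since, unlike cycles, they are easily
  transported along the local modifications below.\<close>

definition has_two_core :: "'a set \<Rightarrow> ('a \<Rightarrow> 'a \<Rightarrow> bool) \<Rightarrow> bool" where
  "has_two_core C E \<longleftrightarrow> (\<exists>T\<subseteq>C. two_core T E)"

lemma two_core_mono:
  assumes "two_core T E" "T \<subseteq> S" "\<And>u v. u \<in> S \<Longrightarrow> v \<in> S \<Longrightarrow> E u v \<Longrightarrow> E' u v"
  shows "two_core T E'"
  using assms unfolding two_core_def by (meson subsetD)

lemma cycle_imp_two_core:
  assumes "undirected E" "is_cycle C E cs"
  shows "has_two_core C E"
proof -
  let ?n = "length cs"
  have n: "3 \<le> ?n" and dist: "distinct cs" and sub: "set cs \<subseteq> C"
    and step: "\<And>i. Suc i < ?n \<Longrightarrow> E (cs ! i) (cs ! Suc i)"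
    and "E (last cs) (hd cs)"
    using assms(2) unfolding is_cycle_def by auto
  moreover have "cs \<noteq> []" using n by auto
  ultimately have close: "E (cs ! (?n - 1)) (cs ! 0)"
    by (simp add: last_conv_nth hd_conv_nth)
  have "two_core (set cs) E"
    unfolding two_core_def
  proof (intro conjI ballI)
    show "set cs \<noteq> {}" using n by auto
  next
    fix x assume "x \<in> set cs"
    then obtain i where i: "i < ?n" "x = cs ! i" by (metis in_set_conv_nth)
    define next_i where "next_i = (if Suc i < ?n then Suc i else 0)"
    define prev_i where "prev_i = (if 0 < i then i - 1 else ?n - 1)"
    have bounds: "next_i < ?n" "prev_i < ?n" "next_i \<noteq> prev_i"
      using i n unfolding next_i_def prev_i_def by auto
    have "E x (cs ! next_i)"
    proof (cases "Suc i < ?n")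
      case False
      then have "i = ?n - 1" using i by auto
      then show ?thesis using close i False unfolding next_i_def by simp
    qed (use step i in \<open>auto simp: next_i_def\<close>)
    moreover have "E x (cs ! prev_i)"
      using step[of "i - 1"] close i undirected_sym[OF assms(1)] unfolding prev_i_def
      by (cases "0 < i") auto
    moreover have "cs ! next_i \<noteq> cs ! prev_i"
      using dist bounds by (simp add: nth_eq_iff_index_eq)
    ultimately show "\<exists>y\<in>set cs. \<exists>z\<in>set cs. y \<noteq> z \<and> E x y \<and> E x z"
      using bounds by (meson nth_mem)
  qed
  then show ?thesis unfolding has_two_core_def using sub by blast
qed

definition simple_path :: "'a set \<Rightarrow> ('a \<Rightarrow> 'a \<Rightarrow> bool) \<Rightarrow> 'a list \<Rightarrow> bool" where
  "simple_path T E p \<longleftrightarrow> p \<noteq> [] \<and> distinct p \<and> set p \<subseteq> T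
     \<and> (\<forall>i. Suc i < length p \<longrightarrow> E (p ! i) (p ! Suc i))"

lemma simple_path_snoc:
  assumes "simple_path T E p" "w \<in> T" "w \<notin> set p" "E (last p) w"
  shows "simple_path T E (p @ [w])"
  using assms unfolding simple_path_def
  by (auto simp: nth_append last_conv_nth less_Suc_eq) (metis One_nat_def diff_Suc_1)

lemma longest_simple_path_exists:
  assumes "finite T" "x0 \<in> T"
  obtains p where "simple_path T E p" "\<And>q. simple_path T E q \<Longrightarrow> length q \<le> length p"
proof -
  have "simple_path T E [x0]" using assms(2) by (simp add: simple_path_def)
  moreover have "length q < Suc (card T)" if "simple_path T E q" for q
    using that assms(1) card_mono distinct_card unfolding simple_path_def
    by (metis less_Suc_eq_le)
  ultimately show ?thesis
    using that ex_has_greatest_nat[of "simple_path T E" _ length "Suc (card T)"] by blast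
qed

text \<open>The last vertex of a longest path in a two-core has a second neighbour on the path,
  which closes a cycle.\<close>

lemma two_core_imp_cycle:
  assumes "finite C" "undirected E" "T \<subseteq> C" "two_core T E"
  shows "\<exists>cs. is_cycle C E cs"
proof -
  have "finite T" using assms(1,3) finite_subset by auto
  obtain x0 where "x0 \<in> T" using assms(4) unfolding two_core_def by auto
  then obtain p where p: "simple_path T E p"
    and longest: "\<And>q. simple_path T E q \<Longrightarrow> length q \<le> length p"
    using longest_simple_path_exists[OF \<open>finite T\<close>] by blast
  define n where "n = length p"
  have "p \<noteq> []" "distinct p" using p unfolding simple_path_def by auto
  define x where "x = last p"
  have "x \<in> T" using p \<open>p \<noteq> []\<close> unfolding x_def simple_path_def by auto
  have nbrs_on_path: "w \<in> set p" if "w \<in> T" "E x w" for w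
    using that longest[of "p @ [w]"] simple_path_snoc[OF p] unfolding x_def
    by fastforce
  have x_nth: "x = p ! (n - 1)" using \<open>p \<noteq> []\<close> unfolding x_def n_def by (simp add: last_conv_nth)
  obtain y z where yz: "y \<in> T" "z \<in> T" "y \<noteq> z" "E x y" "E x z"
    using assms(4) \<open>x \<in> T\<close> unfolding two_core_def by blast
  have "2 \<le> n"
  proof (rule ccontr)
    assume "\<not> 2 \<le> n"
    then have "set p = {x}" using \<open>p \<noteq> []\<close> unfolding x_def n_def
      by (cases p) (auto simp: Suc_le_eq)
    then show False using nbrs_on_path[OF yz(1,4)] yz(4) undirected_irrefl[OF assms(2)] by auto
  qed
  obtain w where w: "w \<in> T" "E x w" "w \<noteq> p ! (n - 2)"
    using yz by (cases "y = p ! (n - 2)") auto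
  then obtain j where j: "j < n" "w = p ! j" using nbrs_on_path unfolding n_def by (metis in_set_conv_nth)
  have "j \<noteq> n - 1" using j w x_nth undirected_irrefl[OF assms(2)] by auto
  moreover have "j \<noteq> n - 2" using j w by auto
  ultimately have "j + 3 \<le> n" using j(1) \<open>2 \<le> n\<close> by linarith
  have "is_cycle C E (drop j p)"
    unfolding is_cycle_def
  proof (intro conjI allI impI)
    show "3 \<le> length (drop j p)" using \<open>j + 3 \<le> n\<close> unfolding n_def by auto
    show "distinct (drop j p)" using \<open>distinct p\<close> by auto
    show "set (drop j p) \<subseteq> C" using p assms(3) set_drop_subset unfolding simple_path_def by fastforce
    show "E (drop j p ! i) (drop j p ! Suc i)" if "Suc i < length (drop j p)" for i
      using that p unfolding simple_path_def by auto
    have "last (drop j p) = x" "hd (drop j p) = w"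
      using j unfolding x_def n_def by (simp_all add: last_drop hd_drop_conv_nth)
    then show "E (last (drop j p)) (hd (drop j p))" using w by simp
  qed
  then show ?thesis by blast
qed

lemma is_tree_component_iff:
  assumes "finite S" "undirected E" "v \<in> S"
  shows "is_tree (component S E v) E \<longleftrightarrow> \<not> has_two_core (component S E v) E"
proof -
  have "finite (component S E v)" using assms(1) component_subset finite_subset by metis
  then have "(\<exists>cs. is_cycle (component S E v) E cs) \<longleftrightarrow> has_two_core (component S E v) E"
    using cycle_imp_two_core[OF assms(2)] two_core_imp_cycle[OF _ assms(2)]
    unfolding has_two_core_def by blast
  then show ?thesis
    using connected_graph_component[OF assms(2,3)] unfolding is_tree_def by blast
qed

definition pi_or_acyclic :: "'a set \<Rightarrow> ('a \<Rightarrow> 'a \<Rightarrow> bool) \<Rightarrow> bool" where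
  "pi_or_acyclic C E \<longleftrightarrow> proper_interval C E \<or> \<not> has_two_core C E"

definition pit_graph :: "'a set \<Rightarrow> ('a \<Rightarrow> 'a \<Rightarrow> bool) \<Rightarrow> bool" where
  "pit_graph S E \<longleftrightarrow> (\<forall>v\<in>S. pi_or_acyclic (component S E v) E)"

definition pit_deletion :: "'a set \<Rightarrow> ('a \<Rightarrow> 'a \<Rightarrow> nat) \<Rightarrow> 'a set \<Rightarrow> bool" where
  "pit_deletion V m X \<longleftrightarrow> (\<forall>u\<in>V - X. \<forall>v\<in>V - X. m u v \<le> 1) \<and> pit_graph (V - X) (adjacent m)"

lemma pitvd_iff_pit_deletion:
  assumes "multigraph V m"
  shows "pitvd V m k \<longleftrightarrow> (\<exists>X\<subseteq>V. int (card X) \<le> k \<and> pit_deletion V m X)"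
proof -
  have "finite (V - X)" for X using assms unfolding multigraph_def by simp
  then have "is_tree (component (V - X) (adjacent m) v) (adjacent m)
      \<longleftrightarrow> \<not> has_two_core (component (V - X) (adjacent m) v) (adjacent m)" if "v \<in> V - X" for X v
    using is_tree_component_iff[OF _ multigraph_undirected[OF assms] that] by blast
  then show ?thesis
    unfolding pitvd_def pit_deletion_def pit_graph_def pi_or_acyclic_def by simp
qed

definition interval_model ::
    "'a set \<Rightarrow> ('a \<Rightarrow> 'a \<Rightarrow> bool) \<Rightarrow> ('a \<Rightarrow> real) \<Rightarrow> ('a \<Rightarrow> real) \<Rightarrow> bool" where
  "interval_model C E l r \<longleftrightarrow> (\<forall>v\<in>C. l v \<le> r v)
     \<and> (\<forall>u\<in>C. \<forall>v\<in>C. \<not> (l u \<le> l v \<and> r v \<le> r u \<and> (l u < l v \<or> r v < r u)))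
     \<and> (\<forall>u\<in>C. \<forall>v\<in>C. u \<noteq> v \<longrightarrow> (E u v \<longleftrightarrow> l u \<le> r v \<and> l v \<le> r u))"

lemma proper_interval_iff_model: "proper_interval C E \<longleftrightarrow> (\<exists>l r. interval_model C E l r)"
  unfolding proper_interval_def interval_model_def by blast

lemma interval_model_mirror:
  "interval_model C E l r \<Longrightarrow> interval_model C E (\<lambda>v. - r v) (\<lambda>v. - l v)"
  unfolding interval_model_def by (simp add: conj_ac disj_commute)

lemma interval_model_induced:
  assumes "interval_model C E l r" "C' \<subseteq> C" "\<And>u v. u \<in> C' \<Longrightarrow> v \<in> C' \<Longrightarrow> E' u v = E u v"
  shows "interval_model C' E' l r"
  using assms unfolding interval_model_def by (auto simp: subset_iff)

lemma interval_model_disjoint: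
  assumes "interval_model C E l r" "u \<in> C" "w \<in> C" "u \<noteq> w" "\<not> E u w"
  shows "r w < l u \<or> r u < l w"
  using assms unfolding interval_model_def by (auto simp: not_le)

lemma pi_or_acyclic_induced:
  assumes "pi_or_acyclic C E" "C' \<subseteq> C" "\<And>u v. u \<in> C' \<Longrightarrow> v \<in> C' \<Longrightarrow> E' u v = E u v"
  shows "pi_or_acyclic C' E'"
proof -
  have "proper_interval C' E'" if pi: "proper_interval C E"
  proof -
    obtain l r where "interval_model C E l r" using pi proper_interval_iff_model by blast
    then have "interval_model C' E' l r" by (rule interval_model_induced[OF _ assms(2,3)])
    then show ?thesis using proper_interval_iff_model by blast
  qed
  moreover have "\<not> has_two_core C' E'" if "\<not> has_two_core C E"
  proof
    assume "has_two_core C' E'"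
    then obtain T where "T \<subseteq> C'" "two_core T E'" unfolding has_two_core_def by blast
    then have "two_core T E" using two_core_mono[of T E' C' E] assms(3) by simp
    then show False using that \<open>T \<subseteq> C'\<close> assms(2) unfolding has_two_core_def by blast
  qed
  ultimately show ?thesis using assms(1) unfolding pi_or_acyclic_def by blast
qed

lemma pi_or_acyclic_cong:
  "(\<And>u v. u \<in> C \<Longrightarrow> v \<in> C \<Longrightarrow> E' u v = E u v) \<Longrightarrow> pi_or_acyclic C E' \<longleftrightarrow> pi_or_acyclic C E"
  using pi_or_acyclic_induced[of C E C E'] pi_or_acyclic_induced[of C E' C E] by auto

lemma pit_graph_induced:
  assumes "pit_graph S E" "S' \<subseteq> S" "\<And>u v. u \<in> S' \<Longrightarrow> v \<in> S' \<Longrightarrow> E' u v = E u v"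
  shows "pit_graph S' E'"
  unfolding pit_graph_def
proof
  fix v assume "v \<in> S'"
  have "component S' E' v \<subseteq> component S E v"
    using reach_mono[of S' E' v _ S E] assms(2,3) unfolding component_def by auto
  then show "pi_or_acyclic (component S' E' v) E'"
    using assms \<open>v \<in> S'\<close> component_subset pi_or_acyclic_induced
    unfolding pit_graph_def by (metis subsetD)
qed

lemma component_insert_vertex:
  assumes "b \<in> S" "E c b" "undirected E" "w \<in> S"
    and reach: "\<And>x y. x \<in> S \<Longrightarrow> y \<in> S \<Longrightarrow> reach (insert c S) E x y \<longleftrightarrow> reach S E' x y"
  shows "component (insert c S) E w
    = (if b \<in> component S E' w then insert c (component S E' w) else component S E' w)"
proof -
  have "E b c" using assms(2) undirected_sym[OF assms(3)] by simp
  then have "reach (insert c S) E w c \<longleftrightarrow> reach (insert c S) E w b"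
    using assms(1,2) reach_step[of "insert c S" E w] by blast
  then show ?thesis
    using assms(1,4) reach unfolding component_def by auto
qed

lemma pit_graph_insert_vertex_iff:
  assumes "b \<in> S" "E c b" "undirected E" "undirected E'"
    and reach: "\<And>x y. x \<in> S \<Longrightarrow> y \<in> S \<Longrightarrow> reach (insert c S) E x y \<longleftrightarrow> reach S E' x y"
    and changed: "\<And>x y. x \<in> S \<Longrightarrow> y \<in> S \<Longrightarrow> E x y \<noteq> E' x y \<Longrightarrow> x \<in> component S E' b"
    and local: "pi_or_acyclic (insert c (component S E' b)) E \<longleftrightarrow> pi_or_acyclic (component S E' b) E'"
  shows "pit_graph (insert c S) E \<longleftrightarrow> pit_graph S E'"
proof -
  have old: "pi_or_acyclic (component (insert c S) E w) E \<longleftrightarrow> pi_or_acyclic (component S E' w) E'"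
    if "w \<in> S" for w
  proof (cases "b \<in> component S E' w")
    case True
    then have "component S E' w = component S E' b" using component_eq assms(4) by metis
    then show ?thesis
      using component_insert_vertex[OF assms(1-3) that reach] True local by simp
  next
    case False
    have agree: "E' x y = E x y" if "x \<in> component S E' w" "y \<in> component S E' w" for x y
    proof (rule ccontr)
      assume "E' x y \<noteq> E x y"
      then have "x \<in> component S E' b" using changed that component_subset by (metis subsetD)
      then have "component S E' w = component S E' b"
        using that(1) component_eq assms(4) by metis
      then show False using False self_in_component assms(1) by metis
    qed
    then have "pi_or_acyclic (component S E' w) E' \<longleftrightarrow> pi_or_acyclic (component S E' w) E"
      by (rule pi_or_acyclic_cong)
    then show ?thesis
      using component_insert_vertex[OF assms(1-3) that reach] False by simp
  qed
  have "c \<in> component (insert c S) E b"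
    using assms(1,2) undirected_sym[OF assms(3)] reach_edge[of b "insert c S" c E]
    unfolding component_def by simp
  then have "component (insert c S) E c = component (insert c S) E b"
    using component_eq assms(3) by metis
  then show ?thesis
    unfolding pit_graph_def using old assms(1) by auto
qed

lemma pit_graph_insert_isolated:
  assumes "pit_graph S E" "undirected E" "\<And>x. x \<in> S \<Longrightarrow> \<not> E c x"
  shows "pit_graph (insert c S) E"
proof -
  have no_c: "\<not> E x c" "\<not> E c x" if "x \<in> insert c S" for x
    using that assms(3) undirected_irrefl[OF assms(2)] undirected_sym[OF assms(2), of x c] by auto
  have reach_old: "reach S E v u \<and> u \<noteq> c" if "reach (insert c S) E v u" "v \<in> S" "v \<noteq> c" for v u
    using that(1)
  proof (induction rule: reach_induct)
    case (step y z)
    then have "y \<in> S" "z \<in> S" "z \<noteq> c" using no_c(1)[of y] by auto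
    then show ?case using step reach_step by metis
  qed (use that in simp)
  have "component (insert c S) E v = component S E v" if "v \<in> S" "v \<noteq> c" for v
    using reach_old[OF _ that] reach_mono[of S E v _ "insert c S" E]
    unfolding component_def by auto
  moreover have "component (insert c S) E c = {c}"
  proof -
    have "u = c" if "reach (insert c S) E c u" for u
      using that by (induction rule: reach_induct) (use no_c(2) in auto)
    then show ?thesis unfolding component_def by auto
  qed
  moreover have "pi_or_acyclic {c} E"
    unfolding pi_or_acyclic_def proper_interval_iff_model interval_model_def by auto
  ultimately show ?thesis
    using assms(1) unfolding pit_graph_def by (metis insert_iff)
qed

subsection \<open>Subdividing an edge\<close>

text \<open>The graph (insert c S, E) arises from (S, E') by subdividing the edge bd with c.\<close>

locale subdivision =
  fixes S :: "'a set" and c b d :: 'a and E E' :: "'a \<Rightarrow> 'a \<Rightarrow> bool"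
  assumes c_notin: "c \<notin> S" and b_in: "b \<in> S" and d_in: "d \<in> S" and b_neq_d: "b \<noteq> d"
    and new_edge: "E' b d" and not_old_edge: "\<not> E b d"
    and same_edges: "\<And>x y. x \<in> S \<Longrightarrow> y \<in> S \<Longrightarrow> {x, y} \<noteq> {b, d} \<Longrightarrow> E x y = E' x y"
    and c_adj: "\<And>x. x \<in> S \<Longrightarrow> E c x \<longleftrightarrow> x = b \<or> x = d"
    and undirected_E: "undirected E" and undirected_E': "undirected E'"
begin

lemma E_sym: "E x y = E y x"
  by (rule undirected_sym[OF undirected_E])

lemma E'_sym: "E' x y = E' y x"
  by (rule undirected_sym[OF undirected_E'])

lemma adj_c: "x \<in> S \<Longrightarrow> E x c \<longleftrightarrow> x = b \<or> x = d"
  using c_adj E_sym[of x c] by simp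

lemma subdivision_swap: "subdivision S c d b E E'"
  using c_notin b_in d_in b_neq_d new_edge not_old_edge same_edges c_adj undirected_E undirected_E'
    E_sym[of b d] E'_sym[of b d]
  unfolding subdivision_def by (auto simp: insert_commute)

lemma E_imp_E': "x \<in> S \<Longrightarrow> y \<in> S \<Longrightarrow> E x y \<Longrightarrow> E' x y"
  using same_edges[of x y] new_edge E'_sym[of b d] by (auto simp: doubleton_eq_iff)

lemma E'_imp_E: "x \<in> S \<Longrightarrow> y \<in> S \<Longrightarrow> E' x y \<Longrightarrow> {x, y} \<noteq> {b, d} \<Longrightarrow> E x y"
  using same_edges by blast

lemma reach_iff:
  assumes "x \<in> S" "y \<in> S"
  shows "reach (insert c S) E x y \<longleftrightarrow> reach S E' x y"
proof
  define f where "f u = (if u = c then b else u)" for u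
  have bd: "reach S E' b d" "reach S E' d b"
    using b_in d_in new_edge E'_sym[of b d] reach_edge[of _ S _ E'] by auto
  assume "reach (insert c S) E x y"
  then have "reach S E' (f x) (f y)"
  proof (rule reach_map)
    fix u v assume "u \<in> insert c S" "v \<in> insert c S" "E u v"
    then consider "u = c" "v = b \<or> v = d" | "v = c" "u = b \<or> u = d" | "u \<in> S" "v \<in> S"
      using c_adj adj_c undirected_irrefl[OF undirected_E] by blast
    then show "reach S E' (f u) (f v)"
    proof cases
      case 3
      then show ?thesis
        using \<open>E u v\<close> E_imp_E'[of u v] reach_edge[of u S v E'] c_notin unfolding f_def by auto
    qed (use bd b_neq_d c_notin b_in d_in in \<open>auto simp: f_def\<close>)
  qed
  moreover have "x \<noteq> c" "y \<noteq> c" using assms c_notin by auto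
  ultimately show "reach S E' x y" unfolding f_def by simp
next
  have "reach (insert c S) E x c" "reach (insert c S) E c x" if "x = b \<or> x = d" for x
    using that b_in d_in c_adj adj_c reach_edge[of _ "insert c S" _ E] by auto
  then have cbd: "reach (insert c S) E b d" "reach (insert c S) E d b"
    using reach_trans[of "insert c S" E _ c] by simp_all
  assume "reach S E' x y"
  then have "reach (insert c S) E (id x) (id y)"
  proof (rule reach_map)
    fix u v assume "u \<in> S" "v \<in> S" "E' u v"
    then show "reach (insert c S) E (id u) (id v)"
      using cbd E'_imp_E reach_edge[of u "insert c S" v E] by (auto simp: doubleton_eq_iff)
  qed
  then show "reach (insert c S) E x y" by simp
qed

lemma two_core_contract:
  assumes "C \<subseteq> S" "T \<subseteq> insert c C" "two_core T E"
  shows "has_two_core C E'"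
proof (cases "c \<in> T")
  case True
  then obtain y z where "y \<in> T" "z \<in> T" "y \<noteq> z" "E c y" "E c z"
    using assms(3) unfolding two_core_def by blast
  with assms(1,2) have bT: "b \<in> T" and dT: "d \<in> T"
    using c_adj undirected_irrefl[OF undirected_E] by blast+
  have "two_core (T - {c}) E'"
    unfolding two_core_def
  proof (intro conjI ballI)
    show "T - {c} \<noteq> {}" using bT b_in c_notin by auto
  next
    fix x assume x: "x \<in> T - {c}"
    then have "x \<in> S" using assms(1,2) by auto
    obtain y z where yz: "y \<in> T" "z \<in> T" "y \<noteq> z" "E x y" "E x z"
      using assms(3) x unfolding two_core_def by blast
    show "\<exists>y\<in>T - {c}. \<exists>z\<in>T - {c}. y \<noteq> z \<and> E' x y \<and> E' x z"
    proof (cases "x = b \<or> x = d")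
      case True
      text \<open>x keeps a neighbour w \<noteq> c, and gains the other end of the contracted path.\<close>
      define w where "w = (if y \<noteq> c then y else z)"
      define x' where "x' = (if x = b then d else b)"
      have w: "w \<in> T - {c}" "E x w" using yz unfolding w_def by auto
      then have "w \<in> S" using assms(1,2) by auto
      have "w \<noteq> x'"
        using True w not_old_edge E_sym undirected_irrefl[OF undirected_E] unfolding x'_def by auto
      moreover have "E' x w" using E_imp_E' \<open>x \<in> S\<close> \<open>w \<in> S\<close> w(2) by blast
      moreover have "E' x x'" "x' \<in> T - {c}"
        using True new_edge E'_sym bT dT b_in d_in c_notin unfolding x'_def by auto
      ultimately show ?thesis using w(1) by blast
    next
      case False
      then have "y \<noteq> c" "z \<noteq> c" using yz adj_c \<open>x \<in> S\<close> by auto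
      then have "y \<in> S" "z \<in> S" using yz assms(1,2) by auto
      then show ?thesis using yz \<open>y \<noteq> c\<close> \<open>z \<noteq> c\<close> E_imp_E' \<open>x \<in> S\<close> by blast
    qed
  qed
  then show ?thesis using assms(2) unfolding has_two_core_def by blast
next
  case False
  then have "T \<subseteq> C" using assms(2) by auto
  then have "T \<subseteq> S" using assms(1) by blast
  then have "two_core T E'" by (rule two_core_mono[OF assms(3) _ E_imp_E'])
  then show ?thesis using \<open>T \<subseteq> C\<close> unfolding has_two_core_def by blast
qed

lemma two_core_subdivide:
  assumes "C \<subseteq> S" "T \<subseteq> C" "two_core T E'"
  shows "has_two_core (insert c C) E"
proof (cases "b \<in> T \<and> d \<in> T")
  case True
  have "two_core (insert c T) E"
    unfolding two_core_def
  proof (intro conjI ballI)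
    fix x assume x: "x \<in> insert c T"
    show "\<exists>y\<in>insert c T. \<exists>z\<in>insert c T. y \<noteq> z \<and> E x y \<and> E x z"
    proof (cases "x = c")
      case True
      then show ?thesis using \<open>b \<in> T \<and> d \<in> T\<close> b_neq_d c_adj b_in d_in by blast
    next
      case False
      then have "x \<in> T" "x \<in> S" using x assms(1,2) by auto
      obtain y z where yz: "y \<in> T" "z \<in> T" "y \<noteq> z" "E' x y" "E' x z"
        using assms(3) \<open>x \<in> T\<close> unfolding two_core_def by blast
      then have "y \<in> S" "z \<in> S" using assms(1,2) by auto
      show ?thesis
      proof (cases "x = b \<or> x = d")
        case True
        text \<open>The edge from x to the other end of bd is replaced by the edge from x to c.\<close>
        define x' where "x' = (if x = b then d else b)"
        define w where "w = (if y \<noteq> x' then y else z)"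
        have w: "w \<in> T" "E' x w" "w \<noteq> x'" using yz unfolding w_def by auto
        have "w \<in> S" "w \<noteq> c" using w assms(1,2) c_notin by auto
        then have "E x w"
          using w True E'_imp_E \<open>x \<in> S\<close> undirected_irrefl[OF undirected_E'] b_neq_d
          unfolding x'_def by (auto simp: doubleton_eq_iff)
        moreover have "E x c" using True adj_c \<open>x \<in> S\<close> by blast
        ultimately show ?thesis using w(1) \<open>w \<noteq> c\<close> by blast
      next
        case False
        then have "E x y" "E x z"
          using yz \<open>x \<in> S\<close> \<open>y \<in> S\<close> \<open>z \<in> S\<close> E'_imp_E by (auto simp: doubleton_eq_iff)
        then show ?thesis using yz by blast
      qed
    qed
  qed simp
  then show ?thesis using assms(2) unfolding has_two_core_def by blast
next
  case False
  have "E x y" if "x \<in> T" "y \<in> T" "E' x y" for x y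
    using that False E'_imp_E assms(1,2) by (auto simp: doubleton_eq_iff)
  then have "two_core T E"
    using assms(3) unfolding two_core_def by meson
  then show ?thesis using assms(2) unfolding has_two_core_def by blast
qed

lemma has_two_core_iff:
  assumes "C \<subseteq> S"
  shows "has_two_core (insert c C) E \<longleftrightarrow> has_two_core C E'"
  using two_core_contract[OF assms] two_core_subdivide[OF assms]
  unfolding has_two_core_def[of "insert c C"] has_two_core_def[of C] by blast

lemma same_edges_on:
  "C \<subseteq> S \<Longrightarrow> \<forall>x\<in>C. \<forall>y\<in>C. \<not> ((x = b \<and> y = d) \<or> (x = d \<and> y = b)) \<longrightarrow> E x y = E' x y"
  using same_edges by (auto simp: doubleton_eq_iff)

text \<open>An interval meeting the gap between l d and r b would meet both b and d.\<close>

lemma subdivided_edge_sides: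
  assumes C: "C \<subseteq> S" "b \<in> C" "d \<in> C"
    and no_common: "\<And>w. w \<in> C \<Longrightarrow> \<not> (E' b w \<and> E' d w)"
    and model: "interval_model C E' l r" and "l b \<le> l d"
  shows "l d \<le> r b" "r b \<le> r d"
    and "w \<in> C \<Longrightarrow> w \<noteq> b \<Longrightarrow> w \<noteq> d \<Longrightarrow> r w < l d \<or> r b < l w"
proof -
  have proper: "\<forall>u\<in>C. \<forall>v\<in>C. \<not> (l u \<le> l v \<and> r v \<le> r u \<and> (l u < l v \<or> r v < r u))"
    and adj: "\<forall>u\<in>C. \<forall>v\<in>C. u \<noteq> v \<longrightarrow> (E' u v \<longleftrightarrow> l u \<le> r v \<and> l v \<le> r u)"
    using model unfolding interval_model_def by auto
  show "l d \<le> r b" using adj C new_edge b_neq_d by auto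
  show rbrd: "r b \<le> r d" using proper C \<open>l b \<le> l d\<close> by force
  show "r w < l d \<or> r b < l w" if "w \<in> C" "w \<noteq> b" "w \<noteq> d"
  proof (rule ccontr)
    assume "\<not> (r w < l d \<or> r b < l w)"
    then have "E' b w" "E' d w" using adj that C \<open>l b \<le> l d\<close> rbrd by auto
    then show False using no_common that(1) by blast
  qed
qed

text \<open>Moving the intervals right of b further right makes room for c between b and d.\<close>

lemma interval_model_subdivide:
  assumes C: "C \<subseteq> S" "b \<in> C" "d \<in> C"
    and no_common: "\<And>w. w \<in> C \<Longrightarrow> \<not> (E' b w \<and> E' d w)"
    and model: "interval_model C E' l r" and "l b \<le> l d"
  shows "\<exists>l' r'. interval_model (insert c C) E l' r'"
proof -
  have lr: "\<forall>v\<in>C. l v \<le> r v"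
    and proper: "\<forall>u\<in>C. \<forall>v\<in>C. \<not> (l u \<le> l v \<and> r v \<le> r u \<and> (l u < l v \<or> r v < r u))"
    and adj: "\<forall>u\<in>C. \<forall>v\<in>C. u \<noteq> v \<longrightarrow> (E' u v \<longleftrightarrow> l u \<le> r v \<and> l v \<le> r u)"
    using model unfolding interval_model_def by auto
  note sides = subdivided_edge_sides[OF assms]
  note ldrb = sides(1) and rbrd = sides(2)
  have lrbd: "l b \<le> r b" "l d \<le> r d" using lr C by auto
  define K where "K = r b - l d + 3"
  have K3: "K \<ge> 3" using ldrb unfolding K_def by simp
  define l' where "l' w = (if w = c then r b + 1 else if w = d then r b + 2
    else if r b < l w then l w + K else l w)" for w
  define r' where "r' w = (if w = c then r b + 2 else if w = b then r b + 1 else if w = d then r d + K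
    else if r b < l w then r w + K else r w)" for w
  have cC: "c \<notin> C" using C(1) c_notin by auto
  have vc: "l' c = r b + 1" "r' c = r b + 2" unfolding l'_def r'_def by auto
  have vb: "l' b = l b" "r' b = r b + 1" unfolding l'_def r'_def using b_neq_d cC C lrbd by auto
  have vd: "l' d = r b + 2" "r' d = r d + K" unfolding l'_def r'_def using b_neq_d cC C by auto
  have vL: "\<And>w. w \<in> C \<Longrightarrow> w \<noteq> b \<Longrightarrow> w \<noteq> d \<Longrightarrow> r w < l d \<Longrightarrow> l' w = l w \<and> r' w = r w"
    unfolding l'_def r'_def using cC lr ldrb by fastforce
  have vR: "\<And>w. w \<in> C \<Longrightarrow> w \<noteq> b \<Longrightarrow> w \<noteq> d \<Longrightarrow> r b < l w \<Longrightarrow> l' w = l w + K \<and> r' w = r w + K"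
    unfolding l'_def r'_def using cC by fastforce
  have cases: "u = c \<or> u = b \<or> u = d \<or> (u \<in> C \<and> u \<noteq> b \<and> u \<noteq> d \<and> r u < l d)
      \<or> (u \<in> C \<and> u \<noteq> b \<and> u \<noteq> d \<and> r b < l u)" if "u \<in> insert c C" for u
    using that sides(3)[of u] by auto
  note Eold = same_edges_on[OF C(1)]
  have Ec: "\<forall>x\<in>C. (E c x \<longleftrightarrow> x = b \<or> x = d) \<and> (E x c \<longleftrightarrow> x = b \<or> x = d)"
    using c_adj adj_c C(1) by auto
  have nEbd: "\<not> E b d" "\<not> E d b" using not_old_edge E_sym[of b d] by auto
  have "interval_model (insert c C) E l' r'"
    unfolding interval_model_def
  proof (intro conjI ballI impI)
    fix v assume v: "v \<in> insert c C"
    show "l' v \<le> r' v"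
      using cases[OF v] by (elim disjE) (insert lr lrbd K3 ldrb rbrd, simp_all add: vc vb vd vL vR)
  next
    fix u v assume u: "u \<in> insert c C" and v: "v \<in> insert c C"
    have lu: "u \<in> C \<Longrightarrow> l u \<le> r u" and lv: "v \<in> C \<Longrightarrow> l v \<le> r v" using lr by auto
    have pu: "u \<in> C \<Longrightarrow> v \<in> C \<Longrightarrow> \<not> (l u \<le> l v \<and> r v \<le> r u \<and> (l u < l v \<or> r v < r u))"
      using proper by auto
    show "\<not> (l' u \<le> l' v \<and> r' v \<le> r' u \<and> (l' u < l' v \<or> r' v < r' u))"
      using cases[OF u] cases[OF v]
      by (elim disjE) (insert lu lv pu lrbd K3 ldrb rbrd C, simp_all add: vc vb vd vL vR)
  next
    fix u v assume u: "u \<in> insert c C" and v: "v \<in> insert c C" and "u \<noteq> v"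
    have lu: "u \<in> C \<Longrightarrow> l u \<le> r u" and lv: "v \<in> C \<Longrightarrow> l v \<le> r v" using lr by auto
    have au: "u \<in> C \<Longrightarrow> v \<in> C \<Longrightarrow> (E' u v \<longleftrightarrow> l u \<le> r v \<and> l v \<le> r u)"
      using adj \<open>u \<noteq> v\<close> by auto
    have eu: "u \<in> C \<Longrightarrow> v \<in> C \<Longrightarrow> \<not> ((u = b \<and> v = d) \<or> (u = d \<and> v = b)) \<Longrightarrow> E u v = E' u v"
      using Eold \<open>u \<noteq> v\<close> by auto
    show "E u v \<longleftrightarrow> l' u \<le> r' v \<and> l' v \<le> r' u"
      using cases[OF u] cases[OF v]
      by (elim disjE) (insert lu lv au eu lrbd K3 ldrb rbrd C Ec nEbd \<open>u \<noteq> v\<close> cC,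
        simp_all add: vc vb vd vL vR)
  qed
  then show ?thesis by blast
qed

text \<open>The interval of c meets those of b and d and no other; as it does not properly
  contain them, neither b nor d is a single point.\<close>

lemma contracted_path_sides:
  assumes C: "C \<subseteq> S" "b \<in> C" "d \<in> C"
    and model: "interval_model (insert c C) E l r" and gap: "r b < l d"
  shows "l c \<le> r b" "l b \<le> r c" "l c \<le> r d" "l d \<le> r c" "l b < r b" "l d < r d"
    and "w \<in> C \<Longrightarrow> w \<noteq> b \<Longrightarrow> w \<noteq> d \<Longrightarrow> r w < l c \<or> r c < l w"
proof -
  have lr: "\<forall>v\<in>insert c C. l v \<le> r v"
    and proper: "\<forall>u\<in>insert c C. \<forall>v\<in>insert c C. \<not> (l u \<le> l v \<and> r v \<le> r u \<and> (l u < l v \<or> r v < r u))"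
    and adj: "\<forall>u\<in>insert c C. \<forall>v\<in>insert c C. u \<noteq> v \<longrightarrow> (E u v \<longleftrightarrow> l u \<le> r v \<and> l v \<le> r u)"
    using model unfolding interval_model_def by auto
  have cC: "c \<notin> C" using C(1) c_notin by auto
  have Ec: "\<forall>x\<in>C. (E c x \<longleftrightarrow> x = b \<or> x = d)" using c_adj C(1) by auto
  show cb: "l c \<le> r b" "l b \<le> r c" using adj C cC Ec by (metis insertCI)+
  show cd: "l c \<le> r d" "l d \<le> r c" using adj C cC Ec by (metis insertCI)+
  have lrb: "l b \<le> r b" "l d \<le> r d" "l c \<le> r c" using lr C by auto
  have "\<not> (l c \<le> l b \<and> r b \<le> r c \<and> (l c < l b \<or> r b < r c))"
    "\<not> (l c \<le> l d \<and> r d \<le> r c \<and> (l c < l d \<or> r d < r c))"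
    using proper C by auto
  then show "l b < r b" "l d < r d" using cb cd lrb gap by linarith+
  show "r w < l c \<or> r c < l w" if "w \<in> C" "w \<noteq> b" "w \<noteq> d"
    using interval_model_disjoint[OF model, of c w] that Ec cC by auto
qed

text \<open>Moving the intervals right of c to the left by the gap between b and d makes b and d
  touch.\<close>

lemma interval_model_contract:
  assumes C: "C \<subseteq> S" "b \<in> C" "d \<in> C"
    and model: "interval_model (insert c C) E l r" and gap: "r b < l d"
  shows "\<exists>l' r'. interval_model C E' l' r'"
proof -
  have lr: "\<forall>v\<in>insert c C. l v \<le> r v"
    and proper: "\<forall>u\<in>insert c C. \<forall>v\<in>insert c C. \<not> (l u \<le> l v \<and> r v \<le> r u \<and> (l u < l v \<or> r v < r u))"
    and adj: "\<forall>u\<in>insert c C. \<forall>v\<in>insert c C. u \<noteq> v \<longrightarrow> (E u v \<longleftrightarrow> l u \<le> r v \<and> l v \<le> r u)"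
    using model unfolding interval_model_def by auto
  note sides = contracted_path_sides[OF assms]
  note cb = sides(1,2) and cd = sides(3,4) and lbs = sides(5) and lds = sides(6)
  have lrb: "l b \<le> r b" "l d \<le> r d" "l c \<le> r c" using lr C by auto
  define K where "K = l d - r b"
  have K0: "K > 0" using gap unfolding K_def by simp
  define l' where "l' w = (if r b < l w then l w - K else l w)" for w
  define r' where "r' w = (if r b < l w then r w - K else r w)" for w
  have vb: "l' b = l b" "r' b = r b" unfolding l'_def r'_def using lrb by auto
  have vd: "l' d = r b" "r' d = r d - K" unfolding l'_def r'_def K_def using gap by auto
  have vL: "\<And>w. w \<in> C \<Longrightarrow> r w < l c \<Longrightarrow> l' w = l w \<and> r' w = r w"
    unfolding l'_def r'_def using lr cb by fastforce
  have vR: "\<And>w. w \<in> C \<Longrightarrow> r c < l w \<Longrightarrow> l' w = l w - K \<and> r' w = r w - K"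
    unfolding l'_def r'_def using cd gap by fastforce
  have cases: "u = b \<or> u = d \<or> (u \<in> C \<and> u \<noteq> b \<and> u \<noteq> d \<and> r u < l c)
      \<or> (u \<in> C \<and> u \<noteq> b \<and> u \<noteq> d \<and> r c < l u)" if "u \<in> C" for u
    using that sides(7)[of u] by auto
  note Eold = same_edges_on[OF C(1)]
  have Ebd': "E' b d" "E' d b" using new_edge E'_sym[of b d] by auto
  have "interval_model C E' l' r'"
    unfolding interval_model_def
  proof (intro conjI ballI impI)
    fix v assume v: "v \<in> C"
    show "l' v \<le> r' v"
      using cases[OF v] by (elim disjE) (insert lr lrb K0 lbs lds gap v cb cd,
        simp_all add: vb vd vL vR K_def)
  next
    fix u v assume u: "u \<in> C" and v: "v \<in> C"
    have lu: "l u \<le> r u" and lv: "l v \<le> r v" using lr u v by auto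
    have pu: "\<not> (l u \<le> l v \<and> r v \<le> r u \<and> (l u < l v \<or> r v < r u))" using proper u v by auto
    show "\<not> (l' u \<le> l' v \<and> r' v \<le> r' u \<and> (l' u < l' v \<or> r' v < r' u))"
      using cases[OF u] cases[OF v]
      by (elim disjE) (insert lu lv pu lrb K0 lbs lds gap cb cd u v,
        simp_all add: vb vd vL vR K_def)
  next
    fix u v assume u: "u \<in> C" and v: "v \<in> C" and "u \<noteq> v"
    have lu: "l u \<le> r u" and lv: "l v \<le> r v" using lr u v by auto
    have au: "E u v \<longleftrightarrow> l u \<le> r v \<and> l v \<le> r u" using adj \<open>u \<noteq> v\<close> u v by auto
    have eu: "\<not> ((u = b \<and> v = d) \<or> (u = d \<and> v = b)) \<Longrightarrow> E u v = E' u v"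
      using Eold \<open>u \<noteq> v\<close> u v by auto
    show "E' u v \<longleftrightarrow> l' u \<le> r' v \<and> l' v \<le> r' u"
      using cases[OF u] cases[OF v]
      by (elim disjE) (insert lu lv au eu lrb K0 lbs lds gap cb cd u v \<open>u \<noteq> v\<close> Ebd',
        simp_all add: vb vd vL vR K_def)
  qed
  then show ?thesis by blast
qed

lemma proper_interval_subdivide:
  assumes "C \<subseteq> S" "b \<in> C" "d \<in> C" and no_common: "\<And>w. w \<in> C \<Longrightarrow> \<not> (E' b w \<and> E' d w)"
    and "proper_interval C E'"
  shows "proper_interval (insert c C) E"
proof -
  interpret swapped: subdivision S c d b E E' by (rule subdivision_swap)
  obtain l r where model: "interval_model C E' l r"
    using assms(5) proper_interval_iff_model by blast
  have no_common': "\<And>w. w \<in> C \<Longrightarrow> \<not> (E' d w \<and> E' b w)" using no_common by blast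
  have "l b \<le> l d \<or> l d \<le> l b" by linarith
  then have "\<exists>l' r'. interval_model (insert c C) E l' r'"
    using interval_model_subdivide[OF assms(1-3) no_common model]
      swapped.interval_model_subdivide[OF assms(1,3,2) no_common' model] by blast
  then show ?thesis using proper_interval_iff_model by blast
qed

lemma proper_interval_contract:
  assumes "C \<subseteq> S" "b \<in> C" "d \<in> C" "proper_interval (insert c C) E"
  shows "proper_interval C E'"
proof -
  interpret swapped: subdivision S c d b E E' by (rule subdivision_swap)
  obtain l r where model: "interval_model (insert c C) E l r"
    using assms(4) proper_interval_iff_model by blast
  then have "\<not> (l b \<le> r d \<and> l d \<le> r b)"
    using not_old_edge b_neq_d assms(2,3) unfolding interval_model_def by auto
  then have "r b < l d \<or> r d < l b" by linarith
  then have "\<exists>l' r'. interval_model C E' l' r'"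
    using interval_model_contract[OF assms(1-3) model]
      swapped.interval_model_contract[OF assms(1,3,2) model] by blast
  then show ?thesis using proper_interval_iff_model by blast
qed

lemma pi_or_acyclic_iff:
  assumes "C \<subseteq> S" "b \<in> C" "d \<in> C" "\<And>w. w \<in> C \<Longrightarrow> \<not> (E' b w \<and> E' d w)"
  shows "pi_or_acyclic (insert c C) E \<longleftrightarrow> pi_or_acyclic C E'"
  unfolding pi_or_acyclic_def
  using proper_interval_subdivide[OF assms] proper_interval_contract[OF assms(1-3)]
    has_two_core_iff[OF assms(1)] by blast

lemma pit_graph_iff:
  assumes no_common: "\<And>w. w \<in> S \<Longrightarrow> \<not> (E' b w \<and> E' d w)"
  shows "pit_graph (insert c S) E \<longleftrightarrow> pit_graph S E'"
proof (rule pit_graph_insert_vertex_iff[OF b_in _ undirected_E undirected_E' reach_iff])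
  show "E c b" using c_adj b_in by simp
  let ?C = "component S E' b"
  have C: "?C \<subseteq> S" "b \<in> ?C" "d \<in> ?C"
    using component_subset self_in_component[OF b_in] b_in d_in new_edge reach_edge[of b S d E']
    unfolding component_def by auto
  show "x \<in> ?C" if "x \<in> S" "y \<in> S" "E x y \<noteq> E' x y" for x y
    using that same_edges[of x y] C by (auto simp: doubleton_eq_iff)
  have "\<And>w. w \<in> ?C \<Longrightarrow> \<not> (E' b w \<and> E' d w)" using no_common C(1) by blast
  then show "pi_or_acyclic (insert c ?C) E \<longleftrightarrow> pi_or_acyclic ?C E'"
    by (rule pi_or_acyclic_iff[OF C])
qed

end

subsection \<open>Attaching a pendant vertex\<close>

locale pendant =
  fixes S :: "'a set" and c d :: 'a and E :: "'a \<Rightarrow> 'a \<Rightarrow> bool"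
  assumes c_notin: "c \<notin> S" and d_in: "d \<in> S" and c_adj: "\<And>x. x \<in> S \<Longrightarrow> E c x \<longleftrightarrow> x = d"
    and undirected_E: "undirected E"
begin

lemma adj_c: "x \<in> S \<Longrightarrow> E x c \<longleftrightarrow> x = d"
  using c_adj undirected_sym[OF undirected_E, of x c] by simp

lemma reach_iff:
  assumes "x \<in> S" "y \<in> S"
  shows "reach (insert c S) E x y \<longleftrightarrow> reach S E x y"
proof
  define f where "f u = (if u = c then d else u)" for u
  assume "reach (insert c S) E x y"
  then have "reach S E (f x) (f y)"
  proof (rule reach_map)
    fix u v assume "u \<in> insert c S" "v \<in> insert c S" "E u v"
    then consider "u = c" "v = d" | "v = c" "u = d" | "u \<in> S" "v \<in> S" "u \<noteq> c" "v \<noteq> c"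
      using c_adj adj_c undirected_irrefl[OF undirected_E] by blast
    then show "reach S E (f u) (f v)"
      by cases (use \<open>E u v\<close> reach_edge[of u S v E] in \<open>auto simp: f_def\<close>)
  qed
  moreover have "x \<noteq> c" "y \<noteq> c" using assms c_notin by auto
  ultimately show "reach S E x y" unfolding f_def by simp
next
  assume "reach S E x y"
  then show "reach (insert c S) E x y" by (rule reach_mono) auto
qed

lemma has_two_core_iff:
  assumes "C \<subseteq> S"
  shows "has_two_core (insert c C) E \<longleftrightarrow> has_two_core C E"
proof
  assume "has_two_core (insert c C) E"
  then obtain T where T: "T \<subseteq> insert c C" "two_core T E" unfolding has_two_core_def by blast
  have "c \<notin> T"
  proof
    assume "c \<in> T"
    then obtain y z where yz: "y \<in> T" "z \<in> T" "y \<noteq> z" "E c y" "E c z"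
      using T(2) unfolding two_core_def by blast
    then have "y \<noteq> c" "z \<noteq> c" using undirected_irrefl[OF undirected_E] by auto
    then have "y = d" "z = d" using yz T(1) assms c_adj by auto
    then show False using yz(3) by simp
  qed
  then show "has_two_core C E" using T unfolding has_two_core_def by blast
next
  assume "has_two_core C E"
  then show "has_two_core (insert c C) E" unfolding has_two_core_def by blast
qed

lemma pendant_sides:
  assumes C: "C \<subseteq> S" "d \<in> C"
    and one_nbr: "\<And>w. w \<in> C \<Longrightarrow> E d w \<Longrightarrow> w = e"
    and model: "interval_model C E l r" and left: "e \<in> C \<Longrightarrow> E d e \<Longrightarrow> l e \<le> l d"
  shows "e \<in> C \<Longrightarrow> E d e \<Longrightarrow> l e \<le> l d \<and> r e \<le> r d \<and> l d \<le> r e \<and> l e \<le> r e"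
    and "w \<in> C \<Longrightarrow> w \<noteq> d \<Longrightarrow> \<not> (w = e \<and> e \<in> C \<and> E d e) \<Longrightarrow> r w < l d \<or> r d < l w"
proof -
  have lr: "\<forall>v\<in>C. l v \<le> r v"
    and proper: "\<forall>u\<in>C. \<forall>v\<in>C. \<not> (l u \<le> l v \<and> r v \<le> r u \<and> (l u < l v \<or> r v < r u))"
    and adj: "\<forall>u\<in>C. \<forall>v\<in>C. u \<noteq> v \<longrightarrow> (E u v \<longleftrightarrow> l u \<le> r v \<and> l v \<le> r u)"
    using model unfolding interval_model_def by auto
  show "l e \<le> l d \<and> r e \<le> r d \<and> l d \<le> r e \<and> l e \<le> r e" if "e \<in> C" "E d e"
  proof -
    have "e \<noteq> d" using that undirected_irrefl[OF undirected_E] by auto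
    then have "l e \<le> l d" "l d \<le> r e" "l e \<le> r e" using left adj lr that C by auto
    moreover have "\<not> (l e \<le> l d \<and> r d \<le> r e \<and> (l e < l d \<or> r d < r e))"
      "\<not> (l d \<le> l e \<and> r e \<le> r d \<and> (l d < l e \<or> r e < r d))"
      using proper that C by auto
    moreover have "l d \<le> r d" using lr C by auto
    ultimately show ?thesis by linarith
  qed
  show "r w < l d \<or> r d < l w" if "w \<in> C" "w \<noteq> d" "\<not> (w = e \<and> e \<in> C \<and> E d e)"
    using interval_model_disjoint[OF model C(2), of w] that one_nbr by blast
qed

text \<open>The neighbour e of d, if any, lies to the left of d; d is moved just past its right
  end, e is stretched to reach it, and c is attached to the right of d.\<close>

lemma interval_model_pendant:
  assumes C: "C \<subseteq> S" "d \<in> C"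
    and one_nbr: "\<And>w. w \<in> C \<Longrightarrow> E d w \<Longrightarrow> w = e"
    and model: "interval_model C E l r" and left: "e \<in> C \<Longrightarrow> E d e \<Longrightarrow> l e \<le> l d"
  shows "\<exists>l' r'. interval_model (insert c C) E l' r'"
proof -
  have lr: "\<forall>v\<in>C. l v \<le> r v"
    and proper: "\<forall>u\<in>C. \<forall>v\<in>C. \<not> (l u \<le> l v \<and> r v \<le> r u \<and> (l u < l v \<or> r v < r u))"
    and adj: "\<forall>u\<in>C. \<forall>v\<in>C. u \<noteq> v \<longrightarrow> (E u v \<longleftrightarrow> l u \<le> r v \<and> l v \<le> r u)"
    using model unfolding interval_model_def by auto
  have cC: "c \<notin> C" using C(1) c_notin by auto
  define hE where "hE \<longleftrightarrow> e \<in> C \<and> E d e"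
  have eC: "hE \<Longrightarrow> e \<in> C \<and> e \<noteq> d \<and> E d e \<and> E e d"
    unfolding hE_def using undirected_irrefl[OF undirected_E] undirected_sym[OF undirected_E, of d e]
    by auto
  have lrd: "l d \<le> r d" using lr C by auto
  note geometry = pendant_sides[OF assms]
  have eF: "hE \<Longrightarrow> l e \<le> l d \<and> r e \<le> r d \<and> l d \<le> r e \<and> l e \<le> r e"
    using geometry(1) unfolding hE_def by blast
  have sides: "r w < l d \<or> r d < l w" if "w \<in> C" "w \<noteq> d" "\<not> (w = e \<and> hE)" for w
    using geometry(2) that unfolding hE_def by blast
  define l' where "l' w = (if w = c then r d + 2 else if w = d then r d + 1
    else if r d < l w then l w + 4 else l w)" for w
  define r' where "r' w = (if w = c then r d + 3 else if w = d then r d + 2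
    else if w = e \<and> hE then r d + 1 else if r d < l w then r w + 4 else r w)" for w
  have vc: "l' c = r d + 2" "r' c = r d + 3" unfolding l'_def r'_def by auto
  have vd: "l' d = r d + 1" "r' d = r d + 2" unfolding l'_def r'_def using cC C by auto
  have ve: "hE \<Longrightarrow> l' e = l e \<and> r' e = r d + 1"
    unfolding l'_def r'_def using cC eC eF lrd by auto
  have vL: "\<And>w. w \<in> C \<Longrightarrow> w \<noteq> d \<Longrightarrow> \<not> (w = e \<and> hE) \<Longrightarrow> r w < l d \<Longrightarrow> l' w = l w \<and> r' w = r w"
    unfolding l'_def r'_def using cC lr lrd by fastforce
  have vR: "\<And>w. w \<in> C \<Longrightarrow> w \<noteq> d \<Longrightarrow> \<not> (w = e \<and> hE) \<Longrightarrow> r d < l w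
      \<Longrightarrow> l' w = l w + 4 \<and> r' w = r w + 4"
    unfolding l'_def r'_def using cC by fastforce
  have cases: "u = c \<or> u = d \<or> (u = e \<and> hE) \<or> (u \<in> C \<and> u \<noteq> d \<and> \<not> (u = e \<and> hE) \<and> r u < l d)
      \<or> (u \<in> C \<and> u \<noteq> d \<and> \<not> (u = e \<and> hE) \<and> r d < l u)" if "u \<in> insert c C" for u
    using that sides[of u] by auto
  have Ec: "\<forall>x\<in>C. (E c x \<longleftrightarrow> x = d) \<and> (E x c \<longleftrightarrow> x = d)"
    using c_adj adj_c C(1) by auto
  have "interval_model (insert c C) E l' r'"
    unfolding interval_model_def
  proof (intro conjI ballI impI)
    fix v assume v: "v \<in> insert c C"
    show "l' v \<le> r' v"
      using cases[OF v] by (elim disjE) (insert lr lrd eF, simp_all add: vc vd ve vL vR)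
  next
    fix u v assume u: "u \<in> insert c C" and v: "v \<in> insert c C"
    have lu: "u \<in> C \<Longrightarrow> l u \<le> r u" and lv: "v \<in> C \<Longrightarrow> l v \<le> r v" using lr by auto
    have pu: "u \<in> C \<Longrightarrow> v \<in> C \<Longrightarrow> \<not> (l u \<le> l v \<and> r v \<le> r u \<and> (l u < l v \<or> r v < r u))"
      using proper by auto
    show "\<not> (l' u \<le> l' v \<and> r' v \<le> r' u \<and> (l' u < l' v \<or> r' v < r' u))"
      using cases[OF u] cases[OF v]
      by (elim disjE) (insert lu lv pu lrd eF eC C, simp_all add: vc vd ve vL vR)
  next
    fix u v assume u: "u \<in> insert c C" and v: "v \<in> insert c C" and "u \<noteq> v"
    have lu: "u \<in> C \<Longrightarrow> l u \<le> r u" and lv: "v \<in> C \<Longrightarrow> l v \<le> r v" using lr by auto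
    have au: "u \<in> C \<Longrightarrow> v \<in> C \<Longrightarrow> (E u v \<longleftrightarrow> l u \<le> r v \<and> l v \<le> r u)"
      using adj \<open>u \<noteq> v\<close> by auto
    show "E u v \<longleftrightarrow> l' u \<le> r' v \<and> l' v \<le> r' u"
      using cases[OF u] cases[OF v]
      by (elim disjE) (insert lu lv au lrd eF eC C Ec \<open>u \<noteq> v\<close> cC, simp_all add: vc vd ve vL vR)
  qed
  then show ?thesis by blast
qed

lemma proper_interval_pendant:
  assumes "C \<subseteq> S" "d \<in> C" and one_nbr: "\<And>x y. x \<in> C \<Longrightarrow> y \<in> C \<Longrightarrow> E d x \<Longrightarrow> E d y \<Longrightarrow> x = y"
    and "proper_interval C E"
  shows "proper_interval (insert c C) E"
proof -
  obtain e where e: "\<And>w. w \<in> C \<Longrightarrow> E d w \<Longrightarrow> w = e"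
  proof (cases "\<exists>w\<in>C. E d w")
    case True
    then obtain e where "e \<in> C" "E d e" by blast
    then show ?thesis using that one_nbr by blast
  qed blast
  obtain l r where model: "interval_model C E l r"
    using assms(4) proper_interval_iff_model by blast
  have "\<exists>l' r'. interval_model (insert c C) E l' r'"
  proof (cases "e \<in> C \<and> E d e \<and> l d < l e")
    case False
    then show ?thesis by (intro interval_model_pendant[OF assms(1,2) e model]) auto
  next
    case True
    text \<open>Reflect the model so that e lies to the left of d.\<close>
    have "\<not> (l d \<le> l e \<and> r e \<le> r d \<and> (l d < l e \<or> r e < r d))"
      using model True assms(2) unfolding interval_model_def by blast
    then have "r d < r e" using True by auto
    then show ?thesis
      by (intro interval_model_pendant[OF assms(1,2) e interval_model_mirror[OF model]]) auto
  qed
  then show ?thesis using proper_interval_iff_model by blast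
qed

lemma pit_graph_iff:
  assumes "\<And>x y. x \<in> S \<Longrightarrow> y \<in> S \<Longrightarrow> E d x \<Longrightarrow> E d y \<Longrightarrow> x = y"
  shows "pit_graph (insert c S) E \<longleftrightarrow> pit_graph S E"
proof (rule pit_graph_insert_vertex_iff[OF d_in _ undirected_E undirected_E reach_iff])
  show "E c d" using c_adj d_in by simp
  let ?C = "component S E d"
  have C: "?C \<subseteq> S" "d \<in> ?C" using component_subset[of S E d] self_in_component[OF d_in] by auto
  then have "\<And>x y. x \<in> ?C \<Longrightarrow> y \<in> ?C \<Longrightarrow> E d x \<Longrightarrow> E d y \<Longrightarrow> x = y" using assms by blast
  then have "pi_or_acyclic ?C E \<Longrightarrow> pi_or_acyclic (insert c ?C) E"
    using proper_interval_pendant[OF C] has_two_core_iff[OF C(1)] unfolding pi_or_acyclic_def by blast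
  moreover have "pi_or_acyclic (insert c ?C) E \<Longrightarrow> pi_or_acyclic ?C E"
    by (rule pi_or_acyclic_induced) auto
  ultimately show "pi_or_acyclic (insert c ?C) E \<longleftrightarrow> pi_or_acyclic ?C E" by blast
qed auto

end

subsection \<open>Suppressing one vertex of a long degree-2 path\<close>

definition deg2_between :: "('a \<Rightarrow> 'a \<Rightarrow> nat) \<Rightarrow> 'a \<Rightarrow> 'a \<Rightarrow> 'a \<Rightarrow> bool" where
  "deg2_between m x y z \<longleftrightarrow> m y x = 1 \<and> m y z = 1 \<and> (\<forall>u. 0 < m y u \<longrightarrow> u = x \<or> u = z)"

fun deg2_interior :: "('a \<Rightarrow> 'a \<Rightarrow> nat) \<Rightarrow> 'a list \<Rightarrow> bool" where
  "deg2_interior m (x # y # z # P) \<longleftrightarrow> deg2_between m x y z \<and> deg2_interior m (y # z # P)"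
| "deg2_interior m _ \<longleftrightarrow> True"

lemma multigraph_reduce_mult:
  assumes "multigraph V m" "a \<noteq> b" "a \<in> V - Z" "b \<in> V - Z"
  shows "multigraph (V - Z) (reduce_mult m Z a b)"
  using assms unfolding multigraph_def reduce_mult_def by auto

lemma pit_deletion_induced:
  assumes "pit_deletion V m X" "V' - X' \<subseteq> V - X"
    and "\<And>u v. u \<in> V' - X' \<Longrightarrow> v \<in> V' - X' \<Longrightarrow> m' u v = m u v"
  shows "pit_deletion V' m' X'"
  using assms pit_graph_induced[of "V - X" "adjacent m" "V' - X'" "adjacent m'"]
  unfolding pit_deletion_def by (auto simp: subset_iff)

lemma deg2_interior_cong:
  "(\<And>y. y \<in> set Q \<Longrightarrow> m1 y = m2 y) \<Longrightarrow> deg2_interior m1 (x # Q) \<longleftrightarrow> deg2_interior m2 (x # Q)"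
proof (induction Q arbitrary: x)
  case (Cons y Q)
  then show ?case by (cases Q) (simp_all add: deg2_between_def)
qed simp

lemma deg2_interior_prefix: "deg2_interior m (P @ Q) \<Longrightarrow> deg2_interior m P"
  by (induction m P rule: deg2_interior.induct) auto

locale deg2_suppression =
  fixes V :: "'a set" and m :: "'a \<Rightarrow> 'a \<Rightarrow> nat" and a b c d e :: 'a
  assumes multigraph: "multigraph V m" and distinct: "distinct [a, b, c, d, e]"
    and deg2: "deg2_interior m [a, b, c, d, e]"
begin

abbreviation m' :: "'a \<Rightarrow> 'a \<Rightarrow> nat" where
  "m' \<equiv> reduce_mult m {c} b d"

lemma m_sym: "m x y = m y x"
  using multigraph unfolding multigraph_def by auto

lemma nbrs_b: "m b a = 1" "m b c = 1" "0 < m b u \<Longrightarrow> u = a \<or> u = c"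
  and nbrs_c: "m c b = 1" "m c d = 1" "0 < m c u \<Longrightarrow> u = b \<or> u = d"
  and nbrs_d: "m d c = 1" "m d e = 1" "0 < m d u \<Longrightarrow> u = c \<or> u = e"
  using deg2 by (auto simp: deg2_between_def)

lemma in_V: "a \<in> V" "b \<in> V" "c \<in> V" "d \<in> V" "e \<in> V"
  using multigraph nbrs_b nbrs_d unfolding multigraph_def by (metis zero_less_one)+

lemma m_bd: "m b d = 0" "m d b = 0"
  using nbrs_b(3)[of d] distinct m_sym[of b d] by auto

lemma m'_eq: "x \<noteq> c \<Longrightarrow> y \<noteq> c \<Longrightarrow> m' x y = m x y + (if {x, y} = {b, d} then 1 else 0)"
  by (auto simp: reduce_mult_def doubleton_eq_iff)

lemma m'_unchanged: "x \<notin> {b, c, d} \<Longrightarrow> m' x = m x"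
  using nbrs_c(3)[of x] m_sym[of x c] by (auto simp: reduce_mult_def fun_eq_iff)

lemma multigraph_m': "multigraph (V - {c}) m'"
  by (rule multigraph_reduce_mult[OF multigraph]) (use distinct in_V in auto)

lemma m'_agrees:
  assumes "u \<in> S" "v \<in> S" "S \<subseteq> V - {c}" "\<not> (b \<in> S \<and> d \<in> S)"
  shows "m' u v = m u v"
proof -
  have "u \<noteq> c" "v \<noteq> c" using assms(1-3) by auto
  then show ?thesis using assms(1,2,4) m'_eq[of u v] by (auto simp: doubleton_eq_iff)
qed

lemma is_subdivision:
  assumes "b \<notin> X" "d \<notin> X"
  shows "subdivision (V - {c} - X) c b d (adjacent m) (adjacent m')"
proof
  show "b \<in> V - {c} - X" "d \<in> V - {c} - X" using assms in_V distinct by auto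
  show "adjacent m' b d" using m'_eq[of b d] distinct by auto
  show "\<not> adjacent m b d" using m_bd by simp
  show "adjacent m x y = adjacent m' x y"
    if "x \<in> V - {c} - X" "y \<in> V - {c} - X" "{x, y} \<noteq> {b, d}" for x y
    using that m'_eq[of x y] by simp
  show "adjacent m c x \<longleftrightarrow> x = b \<or> x = d" if "x \<in> V - {c} - X" for x
    using nbrs_c by auto
  show "undirected (adjacent m)" "undirected (adjacent m')"
    using multigraph_undirected[OF multigraph] multigraph_undirected[OF multigraph_m'] by auto
qed (use distinct in auto)

lemma no_common_neighbour:
  assumes "w \<in> V - {c}"
  shows "\<not> (adjacent m' b w \<and> adjacent m' d w)"
proof
  assume "adjacent m' b w \<and> adjacent m' d w"
  moreover have "w \<noteq> b" "w \<noteq> d"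
    using calculation multigraph_undirected[OF multigraph_m'] undirected_irrefl by metis+
  ultimately have "0 < m b w" "0 < m d w"
    using assms m'_eq[of b w] m'_eq[of d w] distinct by (auto simp: doubleton_eq_iff)
  then have "w = a" "w = e" using nbrs_b(3)[of w] nbrs_d(3)[of w] assms by auto
  then show False using distinct by simp
qed

lemma is_pendant_at_d:
  assumes "b \<in> X" "d \<notin> X"
  shows "pendant (V - {c} - X) c d (adjacent m)"
  using assms in_V distinct nbrs_c multigraph_undirected[OF multigraph]
  by unfold_locales auto

lemma is_pendant_at_b:
  assumes "d \<in> X" "b \<notin> X"
  shows "pendant (V - {c} - X) c b (adjacent m)"
  using assms in_V distinct nbrs_c multigraph_undirected[OF multigraph]
  by unfold_locales auto

lemma suppress_solution:
  assumes "X \<subseteq> V" "pit_deletion V m X"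
  shows "\<exists>X'\<subseteq>V - {c}. card X' \<le> card X \<and> pit_deletion (V - {c}) m' X'"
proof (cases "c \<in> X")
  case True
  text \<open>Deleting b instead of c leaves an induced subgraph of G - X.\<close>
  define X' where "X' = insert b (X - {c})"
  have "finite X" using assms(1) multigraph finite_subset unfolding multigraph_def by auto
  then have "card X' \<le> Suc (card (X - {c}))" by (simp add: X'_def card_insert_if)
  also have "\<dots> = card X" using \<open>finite X\<close> True by (rule card_Suc_Diff1)
  finally have "card X' \<le> card X" .
  moreover have "pit_deletion (V - {c}) m' X'"
  proof (rule pit_deletion_induced[OF assms(2)])
    show "V - {c} - X' \<subseteq> V - X" using True unfolding X'_def by auto
    show "m' u v = m u v" if "u \<in> V - {c} - X'" "v \<in> V - {c} - X'" for u v
      using m'_agrees[OF that] unfolding X'_def by auto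
  qed
  moreover have "X' \<subseteq> V - {c}" using assms(1) in_V distinct unfolding X'_def by auto
  ultimately show ?thesis by blast
next
  case False
  have "pit_deletion (V - {c}) m' X"
  proof (cases "b \<in> X \<or> d \<in> X")
    case True
    show ?thesis
    proof (rule pit_deletion_induced[OF assms(2)])
      show "m' u v = m u v" if "u \<in> V - {c} - X" "v \<in> V - {c} - X" for u v
        using m'_agrees[OF that] True by auto
    qed auto
  next
    case bd: False
    interpret subdivision "V - {c} - X" c b d "adjacent m" "adjacent m'"
      using is_subdivision bd by blast
    have "insert c (V - {c} - X) = V - X" using False in_V by auto
    then have "pit_graph (V - {c} - X) (adjacent m')"
      using assms(2) pit_graph_iff no_common_neighbour unfolding pit_deletion_def by auto
    moreover have "m' u v \<le> 1" if "u \<in> V - {c} - X" "v \<in> V - {c} - X" for u v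
      using that assms(2) m'_eq[of u v] m_bd unfolding pit_deletion_def
      by (auto simp: doubleton_eq_iff)
    ultimately show ?thesis unfolding pit_deletion_def by blast
  qed
  then show ?thesis using assms(1) False by blast
qed

lemma mult_le_1_unsuppress:
  assumes "u \<noteq> c \<Longrightarrow> v \<noteq> c \<Longrightarrow> m' u v \<le> 1"
  shows "m u v \<le> 1"
proof (cases "u = c \<or> v = c")
  case True
  have "m c w \<le> 1" for w
  proof (cases "0 < m c w")
    case True
    then have "w = b \<or> w = d" by (rule nbrs_c(3))
    then show ?thesis using nbrs_c(1,2) by auto
  qed simp
  then show ?thesis using True m_sym[of u c] by auto
next
  case False
  then have "m u v \<le> m' u v" using m'_eq[of u v] by simp
  also have "\<dots> \<le> 1" using assms False by auto
  finally show ?thesis .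
qed

lemma unsuppress_pit_graph:
  assumes "X \<subseteq> V - {c}" and reduced: "pit_graph (V - {c} - X) (adjacent m')"
  shows "pit_graph (V - X) (adjacent m)"
proof -
  let ?S = "V - {c} - X"
  have old: "pit_graph ?S (adjacent m)" if bd: "b \<in> X \<or> d \<in> X"
  proof (rule pit_graph_induced[OF reduced])
    show "adjacent m u v = adjacent m' u v" if "u \<in> ?S" "v \<in> ?S" for u v
      using m'_agrees[OF that] bd by auto
  qed simp
  have "pit_graph (insert c ?S) (adjacent m)"
  proof (cases "b \<in> X"; cases "d \<in> X")
    assume "b \<in> X" "d \<in> X"
    then show ?thesis
      using pit_graph_insert_isolated[OF old multigraph_undirected[OF multigraph]] nbrs_c(3) by auto
  next
    assume "b \<in> X" "d \<notin> X"
    interpret pendant ?S c d "adjacent m" using is_pendant_at_d \<open>b \<in> X\<close> \<open>d \<notin> X\<close> by blast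
    have "x = y" if "x \<in> ?S" "y \<in> ?S" "0 < m d x" "0 < m d y" for x y
      using that nbrs_d(3) by blast
    then show ?thesis using pit_graph_iff old \<open>b \<in> X\<close> by blast
  next
    assume "b \<notin> X" "d \<in> X"
    interpret pendant ?S c b "adjacent m" using is_pendant_at_b \<open>b \<notin> X\<close> \<open>d \<in> X\<close> by blast
    have "x = y" if "x \<in> ?S" "y \<in> ?S" "0 < m b x" "0 < m b y" for x y
      using that nbrs_b(3) by blast
    then show ?thesis using pit_graph_iff old \<open>d \<in> X\<close> by blast
  next
    assume "b \<notin> X" "d \<notin> X"
    interpret subdivision ?S c b d "adjacent m" "adjacent m'"
      using is_subdivision \<open>b \<notin> X\<close> \<open>d \<notin> X\<close> by blast
    show ?thesis using pit_graph_iff no_common_neighbour reduced by auto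
  qed
  moreover have "V - X = insert c ?S" using assms(1) in_V by auto
  ultimately show ?thesis by simp
qed

lemma unsuppress_solution:
  assumes "X \<subseteq> V - {c}" "pit_deletion (V - {c}) m' X"
  shows "pit_deletion V m X"
proof -
  have "m u v \<le> 1" if "u \<in> V - X" "v \<in> V - X" for u v
    using that assms mult_le_1_unsuppress[of u v] unfolding pit_deletion_def by auto
  then show ?thesis
    using unsuppress_pit_graph[OF assms(1)] assms(2) unfolding pit_deletion_def by auto
qed

theorem pitvd_iff: "pitvd V m k \<longleftrightarrow> pitvd (V - {c}) m' k"
  unfolding pitvd_iff_pit_deletion[OF multigraph] pitvd_iff_pit_deletion[OF multigraph_m']
proof
  assume "\<exists>X\<subseteq>V. int (card X) \<le> k \<and> pit_deletion V m X"
  then obtain X where X: "X \<subseteq> V" "int (card X) \<le> k" "pit_deletion V m X" by blast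
  then obtain X' where "X' \<subseteq> V - {c}" "card X' \<le> card X" "pit_deletion (V - {c}) m' X'"
    using suppress_solution by blast
  then show "\<exists>X'\<subseteq>V - {c}. int (card X') \<le> k \<and> pit_deletion (V - {c}) m' X'"
    using X(2) by (intro exI[of _ X']) auto
next
  assume "\<exists>X\<subseteq>V - {c}. int (card X) \<le> k \<and> pit_deletion (V - {c}) m' X"
  then show "\<exists>X\<subseteq>V. int (card X) \<le> k \<and> pit_deletion V m X"
    using unsuppress_solution by blast
qed

lemma deg2_interior_reduced:
  assumes "deg2_interior m (d # e # Q)" "set Q \<inter> {b, c, d} = {}"
  shows "deg2_interior m' (a # b # d # e # Q)"
proof -
  have "m' y = m y" if "y \<in> set (e # Q)" for y
    using that assms(2) distinct m'_unchanged[of y] by auto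
  then have "deg2_interior m' (d # e # Q)"
    using assms(1) deg2_interior_cong[of "e # Q" m' m d] by simp
  moreover have "deg2_between m' a b d"
    using nbrs_b m_bd distinct by (auto simp: deg2_between_def reduce_mult_def doubleton_eq_iff)
  moreover have "deg2_between m' b d e"
    using nbrs_d m_bd distinct by (auto simp: deg2_between_def reduce_mult_def doubleton_eq_iff)
  ultimately show ?thesis by simp
qed

end

subsection \<open>Contracting the whole path\<close>

lemma sum_eq_2_at_two_points:
  fixes f :: "'a \<Rightarrow> nat"
  assumes "finite V" "x \<in> V" "z \<in> V" "x \<noteq> z" "sum f V = 2" "0 < f x" "0 < f z"
  shows "f x = 1 \<and> f z = 1 \<and> (\<forall>u\<in>V. u \<noteq> x \<longrightarrow> u \<noteq> z \<longrightarrow> f u = 0)"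
proof -
  have "sum f V = f x + f z + sum f (V - {x} - {z})"
    using assms(1-4) by (simp add: sum.remove)
  then have "sum f (V - {x} - {z}) = 0" "f x = 1" "f z = 1" using assms(5-7) by linarith+
  then show ?thesis using assms(1) by auto
qed

lemma deg2_path_tl:
  assumes "deg2_path V m (x # P)" "P \<noteq> []"
  shows "deg2_path V m P"
proof -
  have "0 < m (P ! i) (P ! Suc i)" if "Suc i < length P" for i
    using assms(1) that unfolding deg2_path_def by (metis Suc_less_eq length_Cons nth_Cons_Suc)
  moreover have "deg V m (P ! i) = 2" if "0 < i" "Suc i < length P" for i
    using assms(1) that unfolding deg2_path_def by (metis Suc_less_eq length_Cons nth_Cons_Suc zero_less_Suc)
  ultimately show ?thesis using assms unfolding deg2_path_def by auto
qed

lemma deg2_path_between: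
  assumes "multigraph V m" "deg2_path V m (x # y # z # P)"
  shows "deg2_between m x y z"
proof -
  let ?P = "x # y # z # P"
  have "finite V" and supp: "\<And>u v. 0 < m u v \<Longrightarrow> u \<in> V \<and> v \<in> V" and "m y x = m x y"
    using assms(1) unfolding multigraph_def by auto
  have edge: "\<And>i. Suc i < length ?P \<Longrightarrow> 0 < m (?P ! i) (?P ! Suc i)"
    and inner: "\<And>i. 0 < i \<Longrightarrow> Suc i < length ?P \<Longrightarrow> deg V m (?P ! i) = 2"
    and "distinct ?P"
    using assms(2) unfolding deg2_path_def by auto
  then have "0 < m x y" "0 < m y z" "sum (m y) V = 2" "x \<noteq> z"
    using edge[of 0] edge[of 1] inner[of 1] unfolding deg_def by auto
  moreover have "x \<in> V" "z \<in> V" "0 < m y x"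
    using supp \<open>0 < m x y\<close> \<open>0 < m y z\<close> \<open>m y x = m x y\<close> by auto
  ultimately have "m y x = 1 \<and> m y z = 1 \<and> (\<forall>u\<in>V. u \<noteq> x \<longrightarrow> u \<noteq> z \<longrightarrow> m y u = 0)"
    using sum_eq_2_at_two_points[OF \<open>finite V\<close>, of x z "m y"] by blast
  moreover have "u = x \<or> u = z" if "0 < m y u" for u
    using calculation supp[OF that] that by auto
  ultimately show ?thesis unfolding deg2_between_def by blast
qed

lemma deg2_path_imp_deg2_interior:
  "multigraph V m \<Longrightarrow> deg2_path V m P \<Longrightarrow> deg2_interior m P"
proof (induction m P rule: deg2_interior.induct)
  case (1 m x y z P)
  then show ?case using deg2_path_between deg2_path_tl[of V m x "y # z # P"] by auto
qed simp_all

lemma reduce_mult_reduce_mult: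
  assumes "d \<in> Z" "b \<notin> Z0" "y \<notin> Z0"
  shows "reduce_mult (reduce_mult m Z0 b d) Z b y = reduce_mult m (Z0 \<union> Z) b y"
  using assms unfolding reduce_mult_def by (auto simp: fun_eq_iff)

lemma pitvd_contract_deg2_path:
  assumes "multigraph V m" "distinct (a # b # c # R @ [y, z])"
    and "deg2_interior m (a # b # c # R @ [y, z])"
  shows "pitvd V m k \<longleftrightarrow> pitvd (V - insert c (set R)) (reduce_mult m (insert c (set R)) b y) k"
  using assms
proof (induction R arbitrary: V m c)
  case Nil
  interpret deg2_suppression V m a b c y z using Nil by unfold_locales auto
  show ?case using pitvd_iff by simp
next
  case (Cons d R)
  obtain e Q where eQ: "R @ [y, z] = e # Q" by (cases R) auto
  interpret deg2_suppression V m a b c d e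
    using Cons.prems eQ deg2_interior_prefix[of m "[a, b, c, d, e]" Q] by unfold_locales auto
  have "multigraph (V - {c}) m'" by (rule multigraph_m')
  moreover have "distinct (a # b # d # R @ [y, z])" using Cons.prems(2) by auto
  moreover have "deg2_interior m' (a # b # d # R @ [y, z])"
    using deg2_interior_reduced[of Q] Cons.prems eQ by auto
  ultimately have "pitvd (V - {c}) m' k \<longleftrightarrow>
      pitvd (V - {c} - insert d (set R)) (reduce_mult m' (insert d (set R)) b y) k"
    by (rule Cons.IH)
  moreover have "reduce_mult m' (insert d (set R)) b y = reduce_mult m (insert c (set (d # R))) b y"
    using reduce_mult_reduce_mult[of d "insert d (set R)" b "{c}" y m] Cons.prems(2)
    by (auto simp: insert_commute)
  moreover have "V - {c} - insert d (set R) = V - insert c (set (d # R))" by auto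
  ultimately show ?case using pitvd_iff by simp
qed

lemma list_length_ge_5_cases:
  assumes "5 \<le> length P"
  obtains a b c R y z where "P = a # b # c # R @ [y, z]"
proof -
  obtain a b c Q where P: "P = a # b # c # Q" and "2 \<le> length Q"
    using assms by (auto simp: numeral_eq_Suc Suc_le_length_iff)
  then have "Q \<noteq> []" "butlast Q \<noteq> []" by (simp_all flip: length_greater_0_conv)
  then have "Q = butlast (butlast Q) @ [last (butlast Q), last Q]"
    by (metis append_butlast_last_id append.assoc append_Cons append_Nil)
  then show ?thesis using that P by metis
qed

lemma Cons3_append2_middle_nths:
  "{(a # b # c # R @ [y, z]) ! i | i. 2 \<le> i \<and> i \<le> length (a # b # c # R @ [y, z]) - 3}
    = insert c (set R)" (is "?L = _")
proof -
  have "?L = {(c # R) ! j | j. j < length (c # R)}"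
  proof (intro set_eqI iffI)
    fix x assume "x \<in> ?L"
    then obtain i where "x = (a # b # c # R @ [y, z]) ! i" "2 \<le> i" "i \<le> length R + 2" by auto
    then show "x \<in> {(c # R) ! j | j. j < length (c # R)}"
      by (intro CollectI exI[of _ "i - 2"])
        (auto simp: nth_append numeral_eq_Suc nth_Cons' split: if_splits)
  next
    fix x assume "x \<in> {(c # R) ! j | j. j < length (c # R)}"
    then obtain j where "x = (c # R) ! j" "j < length (c # R)" by auto
    then show "x \<in> ?L"
      by (intro CollectI exI[of _ "j + 2"]) (auto simp: nth_append nth_Cons')
  qed
  also have "\<dots> = set (c # R)" by (rule set_conv_nth[symmetric])
  finally show ?thesis by simp
qed

theorem lemma18:
  fixes V :: "'a set" and m :: "'a \<Rightarrow> 'a \<Rightarrow> nat" and k :: int and P :: "'a list"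
  assumes "multigraph V m"
    and "deg2_path V m P"
    and "\<not> deg2_tail V m P"
    and "length P \<ge> 5"
  shows "pitvd V m k \<longleftrightarrow>
    pitvd (V - {P ! i | i. 2 \<le> i \<and> i \<le> length P - 3})
          (reduce_mult m {P ! i | i. 2 \<le> i \<and> i \<le> length P - 3} (P ! 1) (P ! (length P - 2)))
          k"
proof -
  obtain a b c R y z where P: "P = a # b # c # R @ [y, z]"
    using list_length_ge_5_cases[OF assms(4)] .
  have "deg2_interior m P" by (rule deg2_path_imp_deg2_interior[OF assms(1,2)])
  moreover have "distinct P" using assms(2) unfolding deg2_path_def by simp
  ultimately have "pitvd V m k \<longleftrightarrow> pitvd (V - insert c (set R)) (reduce_mult m (insert c (set R)) b y) k"
    using pitvd_contract_deg2_path[OF assms(1)] P by simp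
  moreover have "P ! 1 = b" "P ! (length P - 2) = y" unfolding P by (simp_all add: nth_append)
  ultimately show ?thesis unfolding P Cons3_append2_middle_nths by simp
qed

end
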